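(* Let $F:\mathbb{R}^n\to\mathbb{R}^n$ be continuous, let $x^0\in\mathbb{R}^n$ be arbitrary, and consider the proximal point iteration $x^{k+1}=J_{\alpha F}(x^k)=(\mathrm{Id}+\alpha F)^{-1}(x^k)$ with $\alpha>0$. (i) If $F$ is strongly monotone with respect to a norm $\|\cdot\|$ with monotonicity parameter $c>0$, then for every $\alpha\in]0,\infty[$ the iteration converges to the unique zero $x^*$ of $F$, and for every $k\ge0$, $\|x^{k+1}-x^*\|\le\frac{1}{1+\alpha c}\|x^k-x^*\|$. (ii) If $F$ is monotone and globally Lipschitz continuous with respect to a diagonally weighted $\ell_1$ or $\ell_\infty$ norm $\|\cdot\|$, $\mathrm{diagL}(F)\neq0$, and $\{x:F(x)=0\}\neq\emptyset$, then for every $\alpha\in]0,\infty[$ the iteration converges to a zero of $F$.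
   Context: A weak pairing (WP) on $\mathbb{R}^n$ is a map $[\![\cdot,\cdot]\!]:\mathbb{R}^n\times\mathbb{R}^n\to\mathbb{R}$ that is subadditive and continuous in its first argument, satisfies $[\![\alpha x,y]\!]=[\![x,\alpha y]\!]=\alpha[\![x,y]\!]$ for $\alpha\ge0$ and $[\![-x,-y]\!]=[\![x,y]\!]$, $[\![x,x]\!]>0$ for $x\ne0$, and $|[\![x,y]\!]|\le[\![x,x]\!]^{1/2}[\![y,y]\!]^{1/2}$. It is compatible with a norm if $[\![x,x]\!]=\|x\|^2$. WPs are assumed to also satisfy Deimling's inequality $[\![x,y]\!]\le\|y\|\lim_{h\to0^+}h^{-1}(\|y+hx\|-\|y\|)$ and the curve norm derivative formula ($\|x(t)\|D^+\|x(t)\|=[\![\dot x(t),x(t)]\!]$ a.e. for differentiable curves). $F$ is monotone with monotonicity parameter $c\ge0$ w.r.t. $\|\cdot\|$ if for some compatible WP, $-[\![-(F(x)-F(y)),x-y]\!]\ge c\|x-y\|^2$ for all $x,y$ (monotone: $c=0$; strongly monotone: $c>0$). For continuous monotone $F$ and $\alpha>0$, $J_{\alpha F}=(\mathrm{Id}+\alpha F)^{-1}$ is a single-valued map defined on all of $\mathbb{R}^n$. For $\eta\in\mathbb{R}^n_{>0}$, the diagonally weighted norms are $\|x\|_{1,[\eta]}=\sum_i\eta_i|x_i|$ and $\|x\|_{\infty,[\eta]^{-1}}=\max_i|x_i|/\eta_i$. For Lipschitz $F$, $\mathrm{diagL}(F):=\sup_{x\in\mathbb{R}^n\setminus\Omega_F}\max_{i}(DF(x))_{ii}$,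 where $\Omega_F$ is the measure-zero set where $F$ is not differentiable. *)

theory Defs
  imports "HOL-Analysis.Analysis"
begin

definition is_norm_fun :: "(real^'n \<Rightarrow> real) \<Rightarrow> bool" where
  "is_norm_fun N \<longleftrightarrow>
     (\<forall>x. 0 \<le> N x) \<and> (\<forall>x. N x = 0 \<longleftrightarrow> x = 0) \<and>
     (\<forall>a x. N (a *\<^sub>R x) = \<bar>a\<bar> * N x) \<and> (\<forall>x y. N (x + y) \<le> N x + N y)"

definition weak_pairing :: "(real^'n \<Rightarrow> real^'n \<Rightarrow> real) \<Rightarrow> bool" where
  "weak_pairing W \<longleftrightarrow>
     (\<forall>x1 x2 y. W (x1 + x2) y \<le> W x1 y + W x2 y) \<and>
     (\<forall>y. continuous_on UNIV (\<lambda>x. W x y)) \<and>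
     (\<forall>a x y. a \<ge> 0 \<longrightarrow> W (a *\<^sub>R x) y = a * W x y \<and> W x (a *\<^sub>R y) = a * W x y) \<and>
     (\<forall>x y. W (- x) (- y) = W x y) \<and>
     (\<forall>x. x \<noteq> 0 \<longrightarrow> W x x > 0) \<and>
     (\<forall>x y. \<bar>W x y\<bar> \<le> sqrt (W x x) * sqrt (W y y))"

definition wp_compatible :: "(real^'n \<Rightarrow> real^'n \<Rightarrow> real) \<Rightarrow> (real^'n \<Rightarrow> real) \<Rightarrow> bool" where
  "wp_compatible W N \<longleftrightarrow> (\<forall>x. W x x = (N x)\<^sup>2)"

definition deimling_ineq :: "(real^'n \<Rightarrow> real^'n \<Rightarrow> real) \<Rightarrow> (real^'n \<Rightarrow> real) \<Rightarrow> bool" where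
  "deimling_ineq W N \<longleftrightarrow>
     (\<forall>x y. W x y \<le> N y * Lim (at_right 0) (\<lambda>h. (N (y + h *\<^sub>R x) - N y) / h))"

definition dini_upper_right :: "(real \<Rightarrow> real) \<Rightarrow> real \<Rightarrow> ereal" where
  "dini_upper_right g t = Limsup (at_right 0) (\<lambda>h. ereal ((g (t + h) - g t) / h))"

definition curve_norm_deriv :: "(real^'n \<Rightarrow> real^'n \<Rightarrow> real) \<Rightarrow> (real^'n \<Rightarrow> real) \<Rightarrow> bool" where
  "curve_norm_deriv W N \<longleftrightarrow>
     (\<forall>x :: real \<Rightarrow> real^'n. (\<forall>t. x differentiable (at t)) \<longrightarrow>
        (AE t in lborel. ereal (N (x t)) * dini_upper_right (\<lambda>s. N (x s)) t
                          = ereal (W (vector_derivative x (at t)) (x t))))"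

definition monotone_wrt :: "(real^'n \<Rightarrow> real) \<Rightarrow> (real^'n \<Rightarrow> real^'n) \<Rightarrow> real \<Rightarrow> bool" where
  "monotone_wrt N F c \<longleftrightarrow> c \<ge> 0 \<and>
     (\<exists>W. weak_pairing W \<and> wp_compatible W N \<and> deimling_ineq W N \<and> curve_norm_deriv W N \<and>
          (\<forall>x y. - W (- (F x - F y)) (x - y) \<ge> c * (N (x - y))\<^sup>2))"

definition resolvent :: "real \<Rightarrow> (real^'n \<Rightarrow> real^'n) \<Rightarrow> real^'n \<Rightarrow> real^'n" where
  "resolvent \<alpha> F x = (THE y. y + \<alpha> *\<^sub>R F y = x)"

definition proximal_iter :: "real \<Rightarrow> (real^'n \<Rightarrow> real^'n) \<Rightarrow> real^'n \<Rightarrow> nat \<Rightarrow> real^'n" where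
  "proximal_iter \<alpha> F x0 k = (resolvent \<alpha> F ^^ k) x0"

definition wl1 :: "real^'n \<Rightarrow> real^'n \<Rightarrow> real" where
  "wl1 \<eta> x = (\<Sum>i\<in>UNIV. \<eta> $ i * \<bar>x $ i\<bar>)"

definition wlinf :: "real^'n \<Rightarrow> real^'n \<Rightarrow> real" where
  "wlinf \<eta> x = Max (range (\<lambda>i. \<bar>x $ i\<bar> / \<eta> $ i))"

definition lipschitz_wrt :: "(real^'n \<Rightarrow> real) \<Rightarrow> (real^'n \<Rightarrow> real^'n) \<Rightarrow> bool" where
  "lipschitz_wrt N F \<longleftrightarrow> (\<exists>L. \<forall>x y. N (F x - F y) \<le> L * N (x - y))"

definition diagL :: "(real^'n \<Rightarrow> real^'n) \<Rightarrow> real" where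
  "diagL F = (SUP x\<in>{x. F differentiable (at x)}.
                 Max (range (\<lambda>i. frechet_derivative F (at x) (axis i 1) $ i)))"

end

theory Submission
  imports Defs "HOL-Homology.Invariance_of_Domain"
begin

text \<open>
  (i) Deimling's inequality gives \<open>W (- u) u = - (N u)\<^sup>2\<close> for every compatible weak pairing,
  so \<open>c\<close>-monotonicity of \<open>F\<close> makes \<open>Id + \<alpha> F\<close> expanding with factor \<open>1 + \<alpha> c\<close>. A continuous
  expanding map of \<open>\<real>\<^sup>n\<close> is open by invariance of domain and has closed range, hence is a bijection:
  the resolvent is well defined, \<open>F\<close> has a unique zero, and the resolvent contracts the distance
  to it by the factor \<open>1 / (1 + \<alpha> c)\<close>.

  (ii) For monotone \<open>F\<close> with Lipschitz constant \<open>L\<close>, the curve norm derivative formula along the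
  segment \<open>t \<mapsto> x - y - t (F x - F y)\<close> shows that \<open>N\<close> does not increase to first order in that
  direction. For the weighted \<open>\<ell>\<^sub>1\<close> and \<open>\<ell>\<^sub>\<infinity>\<close> norms this first-order condition makes the
  forward step \<open>S = Id - F / L\<close> nonexpansive. The resolvent \<open>J\<close> is nonexpansive too and
  \<open>J = (1 - \<theta>) Id + \<theta> S \<circ> J\<close> with \<open>\<theta> = \<alpha> L / (1 + \<alpha> L)\<close>, so the proximal iteration is a
  Krasnoselskii-Mann iteration of the nonexpansive map \<open>S \<circ> J\<close>, whose fixed points are the zeros
  of \<open>F\<close>; it converges by Ishikawa's inequality and compactness.
\<close>

section \<open>Norm functions on \<open>\<real>\<^sup>n\<close> and expanding maps\<close>

lemma expanding_imp_bij:
  fixes H :: "'a::euclidean_space \<Rightarrow> 'a"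
  assumes cont: "continuous_on UNIV H" and m: "m > 0"
    and expand: "\<And>x y. m * dist x y \<le> dist (H x) (H y)"
  shows "bij H"
proof -
  have "inj H"
  proof (rule injI)
    fix x y assume "H x = H y"
    then have "m * dist x y \<le> 0" using expand[of x y] by simp
    then show "x = y" using m by (simp add: mult_le_0_iff)
  qed
  have "open (range H)"
    using invariance_of_domain[OF cont open_UNIV] \<open>inj H\<close> by simp
  moreover have "closed (range H)"
    unfolding closed_sequential_limits
  proof (intro allI impI, elim conjE)
    fix s l assume "\<forall>n. s n \<in> range H" and l: "s \<longlonglongrightarrow> l"
    then have "\<forall>n. \<exists>z. s n = H z" by blast
    then obtain y where y: "s = (\<lambda>n. H (y n))" by (metis ext)
    have "Cauchy y"
    proof (rule metric_CauchyI)
      fix e :: real assume "e > 0"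
      then obtain M where M: "\<forall>a\<ge>M. \<forall>b\<ge>M. dist (s a) (s b) < m * e"
        using metric_CauchyD[OF LIMSEQ_imp_Cauchy[OF l], of "m * e"] m by auto
      have "dist (y a) (y b) < e" if "a \<ge> M" "b \<ge> M" for a b
      proof -
        have "m * dist (y a) (y b) < m * e"
          using M that expand[of "y a" "y b"] unfolding y by force
        then show ?thesis using m by simp
      qed
      then show "\<exists>M. \<forall>a\<ge>M. \<forall>b\<ge>M. dist (y a) (y b) < e" by blast
    qed
    then obtain q where "y \<longlonglongrightarrow> q" using Cauchy_convergent_iff convergent_def by blast
    then have "s \<longlonglongrightarrow> H q"
      unfolding y by (rule continuous_on_tendsto_compose[OF cont]) simp_all
    then show "l \<in> range H" using l LIMSEQ_unique by blast
  qed
  ultimately have "range H = UNIV" using clopen[of "range H"] by auto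
  then show "bij H" using \<open>inj H\<close> by (simp add: bij_def)
qed

locale norm_fun =
  fixes N :: "real^'n \<Rightarrow> real"
  assumes is_norm_fun: "is_norm_fun N"
begin

lemma nonneg: "0 \<le> N x"
  using is_norm_fun unfolding is_norm_fun_def by blast

lemma eq_0_iff: "N x = 0 \<longleftrightarrow> x = 0"
  using is_norm_fun unfolding is_norm_fun_def by blast

lemma scale: "N (a *\<^sub>R x) = \<bar>a\<bar> * N x"
  using is_norm_fun unfolding is_norm_fun_def by blast

lemma triangle: "N (x + y) \<le> N x + N y"
  using is_norm_fun unfolding is_norm_fun_def by blast

lemma zero [simp]: "N 0 = 0"
  using eq_0_iff by blast

lemma minus: "N (- x) = N x"
  using scale[of "-1" x] by simp

lemma minus_commute: "N (x - y) = N (y - x)"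
  using minus[of "x - y"] by simp

lemma triangle_diff: "N (x - z) \<le> N (x - y) + N (y - z)"
  using triangle[of "x - y" "y - z"] by simp

lemma reverse_triangle: "\<bar>N x - N y\<bar> \<le> N (x - y)"
  using triangle[of "x - y" y] triangle[of "y - x" x] minus_commute[of x y] by auto

lemma sum_le: "N (sum f S) \<le> (\<Sum>i\<in>S. N (f i))"
proof (induction S rule: infinite_finite_induct)
  case (insert x S)
  then show ?case using triangle[of "f x" "sum f S"] by simp
qed auto

lemma le_norm_mult: "\<exists>C>0. \<forall>x. N x \<le> C * norm x"
proof -
  define C where "C = 1 + (\<Sum>i\<in>UNIV. N (axis i 1))"
  have "C > 0" unfolding C_def using nonneg by (simp add: add_pos_nonneg sum_nonneg)
  moreover have "N x \<le> C * norm x" for x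
  proof -
    have x: "x = (\<Sum>i\<in>UNIV. x $ i *\<^sub>R axis i 1)"
      by (simp add: vec_eq_iff axis_def if_distrib cong: if_cong)
    have "N x \<le> (\<Sum>i\<in>UNIV. N (x $ i *\<^sub>R axis i 1))"
      using sum_le[of "\<lambda>i. x $ i *\<^sub>R axis i 1" UNIV] by (simp only: x[symmetric])
    also have "\<dots> = (\<Sum>i\<in>UNIV. \<bar>x $ i\<bar> * N (axis i 1))"
      by (simp add: scale)
    also have "\<dots> \<le> (\<Sum>i\<in>UNIV. norm x * N (axis i 1))"
      by (intro sum_mono mult_right_mono nonneg) (metis component_le_norm_cart real_norm_def)
    also have "\<dots> \<le> C * norm x"
      by (simp add: C_def sum_distrib_left algebra_simps)
    finally show ?thesis .
  qed
  ultimately show ?thesis by blast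
qed

lemma continuous: "continuous_on S N"
proof -
  obtain C where "C > 0" and C: "\<And>x. N x \<le> C * norm x" using le_norm_mult by blast
  have "C-lipschitz_on S N"
  proof (rule lipschitz_onI)
    show "dist (N x) (N y) \<le> C * dist x y" for x y
      using reverse_triangle[of x y] C[of "x - y"] by (simp add: dist_real_def dist_norm)
  qed (use \<open>C > 0\<close> in simp)
  then show ?thesis by (rule lipschitz_on_continuous_on)
qed

lemma norm_le_mult: "\<exists>c>0. \<forall>x. norm x \<le> c * N x"
proof -
  have "axis undefined 1 \<in> sphere (0::real^'n) 1" by simp
  then obtain m where m: "m \<in> sphere (0::real^'n) 1" and min: "\<forall>y \<in> sphere 0 1. N m \<le> N y"
    using continuous_attains_inf[OF compact_sphere _ continuous] by blast
  have "N m > 0" using m eq_0_iff[of m] nonneg[of m] by auto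
  have "norm x \<le> (1 / N m) * N x" for x
  proof (cases "x = 0")
    case False
    then have "N m \<le> N ((1 / norm x) *\<^sub>R x)" using min by simp
    then have "N m * norm x \<le> N x" using False by (simp add: scale field_simps)
    then show ?thesis using \<open>N m > 0\<close> by (simp add: field_simps)
  qed simp
  then show ?thesis using \<open>N m > 0\<close> by (intro exI[of _ "1 / N m"]) auto
qed

lemma LIMSEQ_N_iff: "x \<longlonglongrightarrow> a \<longleftrightarrow> (\<lambda>k. N (x k - a)) \<longlonglongrightarrow> 0"
proof
  assume "x \<longlonglongrightarrow> a"
  then have "(\<lambda>k. x k - a) \<longlonglongrightarrow> 0" by (rule LIM_zero)
  then have "(\<lambda>k. N (x k - a)) \<longlonglongrightarrow> N 0"
    by (rule continuous_on_tendsto_compose[OF continuous[of UNIV]]) simp_all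
  then show "(\<lambda>k. N (x k - a)) \<longlonglongrightarrow> 0" by simp
next
  assume lim: "(\<lambda>k. N (x k - a)) \<longlonglongrightarrow> 0"
  obtain c where "c > 0" and c: "\<And>x. norm x \<le> c * N x" using norm_le_mult by blast
  have "(\<lambda>k. c * N (x k - a)) \<longlonglongrightarrow> 0" using tendsto_mult_right_zero[OF lim] by simp
  then have "(\<lambda>k. x k - a) \<longlonglongrightarrow> 0"
    by (rule Lim_null_comparison[rotated]) (use c in auto)
  then show "x \<longlonglongrightarrow> a" using Lim_null[of x a] by simp
qed

lemma lipschitz_continuous:
  assumes "\<And>a b. N (T a - T b) \<le> L * N (a - b)"
  shows "continuous_on UNIV T"
proof -
  obtain C where "C > 0" and C: "\<And>x. N x \<le> C * norm x" using le_norm_mult by blast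
  obtain c where "c > 0" and c: "\<And>x. norm x \<le> c * N x" using norm_le_mult by blast
  have "(c * max L 0 * C)-lipschitz_on UNIV T"
  proof (rule lipschitz_onI)
    fix a b :: "real^'n"
    have "dist (T a) (T b) \<le> c * N (T a - T b)" using c by (simp add: dist_norm)
    also have "\<dots> \<le> c * (max L 0 * N (a - b))"
      using assms[of a b] mult_right_mono[OF max.cobounded1[of L 0] nonneg[of "a - b"]] \<open>c > 0\<close>
      by (intro mult_left_mono) simp_all
    also have "\<dots> \<le> c * (max L 0 * (C * norm (a - b)))"
      using C \<open>c > 0\<close> by (intro mult_left_mono) auto
    finally show "dist (T a) (T b) \<le> c * max L 0 * C * dist a b" by (simp add: dist_norm mult_ac)
  qed (use \<open>c > 0\<close> \<open>C > 0\<close> in simp)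
  then show ?thesis by (rule lipschitz_on_continuous_on)
qed

lemma expanding_bij:
  assumes cont: "continuous_on UNIV H" and "m > 0"
    and expand: "\<And>x y. m * N (x - y) \<le> N (H x - H y)"
  shows "bij H"
proof -
  obtain C where "C > 0" and C: "\<And>x. N x \<le> C * norm x" using le_norm_mult by blast
  obtain c where "c > 0" and c: "\<And>x. norm x \<le> c * N x" using norm_le_mult by blast
  have expand': "m / (c * C) * dist x y \<le> dist (H x) (H y)" for x y
  proof -
    have "m * dist x y \<le> c * (m * N (x - y))"
      using c[of "x - y"] \<open>m > 0\<close> by (simp add: dist_norm mult.left_commute)
    also have "\<dots> \<le> c * (C * dist (H x) (H y))"
      using expand[of x y] C[of "H x - H y"] \<open>c > 0\<close> by (simp add: dist_norm)
    finally show ?thesis using \<open>c > 0\<close> \<open>C > 0\<close> by (simp add: field_simps)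
  qed
  show ?thesis
    by (rule expanding_imp_bij[OF cont _ expand']) (use \<open>m > 0\<close> \<open>c > 0\<close> \<open>C > 0\<close> in simp)
qed

lemma geometric_decay_tendsto:
  assumes "0 \<le> q" "q < 1" and step: "\<And>k. N (x (Suc k) - a) \<le> q * N (x k - a)"
  shows "x \<longlonglongrightarrow> a"
proof -
  have bound: "N (x k - a) \<le> q ^ k * N (x 0 - a)" for k
  proof (induction k)
    case (Suc k)
    then show ?case using step[of k] mult_left_mono[OF Suc \<open>0 \<le> q\<close>] by (simp add: mult.assoc)
  qed simp
  have "(\<lambda>k. q ^ k * N (x 0 - a)) \<longlonglongrightarrow> 0"
    using LIMSEQ_power_zero[of q] assms(1,2) by (intro tendsto_mult_left_zero) simp
  then have "(\<lambda>k. N (x k - a)) \<longlonglongrightarrow> 0"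
    by (rule Lim_null_comparison[rotated]) (use bound nonneg in auto)
  then show ?thesis using LIMSEQ_N_iff by blast
qed

end

section \<open>Weak pairings, the resolvent and strongly monotone maps\<close>

lemma weak_pairing_zero_left: "weak_pairing W \<Longrightarrow> W 0 y = 0"
  unfolding weak_pairing_def by (metis mult_zero_left order_refl scaleR_zero_left)

lemma weak_pairing_add_left: "weak_pairing W \<Longrightarrow> W (x1 + x2) y \<le> W x1 y + W x2 y"
  unfolding weak_pairing_def by blast

lemma weak_pairing_scaleR_left: "weak_pairing W \<Longrightarrow> a \<ge> 0 \<Longrightarrow> W (a *\<^sub>R x) y = a * W x y"
  unfolding weak_pairing_def by blast

context norm_fun
begin

lemma pairing_bound:
  assumes "weak_pairing W" "wp_compatible W N"
  shows "\<bar>W x y\<bar> \<le> N x * N y"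
proof -
  have "\<bar>W x y\<bar> \<le> sqrt (W x x) * sqrt (W y y)" using assms(1) unfolding weak_pairing_def by blast
  also have "\<dots> = N x * N y" using assms(2) nonneg unfolding wp_compatible_def by simp
  finally show ?thesis .
qed

text \<open>Deimling's inequality bounds \<open>W (- u) u\<close> from above by the one-sided derivative of the
  norm at \<open>u\<close> in direction \<open>- u\<close>, which is \<open>- N u\<close>; subadditivity bounds it from below.\<close>
lemma pairing_minus_self:
  assumes W: "weak_pairing W" "wp_compatible W N" "deimling_ineq W N"
  shows "W (- u) u = - (N u)\<^sup>2"
proof -
  have "\<forall>\<^sub>F h in at_right 0. (N (u + h *\<^sub>R (- u)) - N u) / h = - N u"
  proof -
    have "\<forall>\<^sub>F h in at_right (0::real). 0 < h \<and> h < 1"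
      using eventually_at_right_real[of 0 1] by simp
    then show ?thesis
    proof (rule eventually_mono)
      fix h :: real assume h: "0 < h \<and> h < 1"
      have "N (u + h *\<^sub>R (- u)) = (1 - h) * N u"
        using scale[of "1 - h" u] h by (simp add: algebra_simps)
      then show "(N (u + h *\<^sub>R (- u)) - N u) / h = - N u"
        using h by (simp add: field_simps)
    qed
  qed
  then have "((\<lambda>h. (N (u + h *\<^sub>R (- u)) - N u) / h) \<longlongrightarrow> - N u) (at_right 0)"
    by (rule tendsto_eventually)
  then have "Lim (at_right 0) (\<lambda>h. (N (u + h *\<^sub>R (- u)) - N u) / h) = - N u"
    by (intro tendsto_Lim) simp_all
  moreover have "W (- u) u \<le> N u * Lim (at_right 0) (\<lambda>h. (N (u + h *\<^sub>R (- u)) - N u) / h)"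
    using W(3) unfolding deimling_ineq_def by blast
  ultimately have upper: "W (- u) u \<le> - (N u)\<^sup>2"
    by (simp add: power2_eq_square)
  have "0 = W (u + - u) u" using weak_pairing_zero_left[OF W(1)] by simp
  also have "\<dots> \<le> W u u + W (- u) u" by (rule weak_pairing_add_left[OF W(1)])
  finally show ?thesis using upper W(2) unfolding wp_compatible_def by simp
qed

lemma id_plus_scaled_expanding:
  assumes "monotone_wrt N F c" "0 \<le> \<alpha>"
  shows "(1 + \<alpha> * c) * N (x - y) \<le> N ((x + \<alpha> *\<^sub>R F x) - (y + \<alpha> *\<^sub>R F y))"
    (is "_ \<le> N ?G")
proof -
  obtain W where W: "weak_pairing W" "wp_compatible W N" "deimling_ineq W N"
    and mono: "c * (N (x - y))\<^sup>2 \<le> - W (- (F x - F y)) (x - y)"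
    using assms(1) unfolding monotone_wrt_def by blast
  have "- ?G = - (x - y) + \<alpha> *\<^sub>R (- (F x - F y))" by (simp add: algebra_simps)
  then have "W (- ?G) (x - y) \<le> W (- (x - y)) (x - y) + W (\<alpha> *\<^sub>R (- (F x - F y))) (x - y)"
    by (simp only:) (rule weak_pairing_add_left[OF W(1)])
  also have "\<dots> \<le> - (N (x - y))\<^sup>2 - \<alpha> * (c * (N (x - y))\<^sup>2)"
    using pairing_minus_self[OF W, of "x - y"] mult_left_mono[OF mono assms(2)]
      weak_pairing_scaleR_left[OF W(1) assms(2), of "- (F x - F y)" "x - y"] by simp
  finally have "(1 + \<alpha> * c) * N (x - y) * N (x - y) \<le> - W (- ?G) (x - y)"
    by (simp add: algebra_simps power2_eq_square)
  also have "\<dots> \<le> N ?G * N (x - y)"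
    using abs_le_D2[OF pairing_bound[OF W(1,2), of "- ?G" "x - y"]] minus[of ?G] by simp
  finally have *: "(1 + \<alpha> * c) * N (x - y) * N (x - y) \<le> N ?G * N (x - y)" .
  show ?thesis
  proof (cases "N (x - y) = 0")
    case False
    then show ?thesis using mult_right_le_imp_le[OF *] nonneg[of "x - y"] by simp
  qed (simp add: nonneg)
qed

lemma monotone_wrt_expanding:
  assumes "monotone_wrt N F c"
  shows "c * N (x - y) \<le> N (F x - F y)"
  using id_plus_scaled_expanding[OF assms, of 1 x y] triangle[of "x - y" "F x - F y"]
  by (simp add: algebra_simps)

end

lemma resolvent_eqI:
  assumes "bij (\<lambda>y. y + \<alpha> *\<^sub>R F y)" "y + \<alpha> *\<^sub>R F y = x"
  shows "resolvent \<alpha> F x = y"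
  unfolding resolvent_def
  by (rule the_equality) (use assms bij_is_inj[OF assms(1)] in \<open>auto dest: injD\<close>)

lemma resolvent_solves:
  assumes "bij (\<lambda>y. y + \<alpha> *\<^sub>R F y)"
  shows "resolvent \<alpha> F x + \<alpha> *\<^sub>R F (resolvent \<alpha> F x) = x"
proof -
  obtain y where y: "y + \<alpha> *\<^sub>R F y = x" using surjD[OF bij_is_surj[OF assms], of x] by auto
  then have "resolvent \<alpha> F x = y" by (rule resolvent_eqI[OF assms])
  then show ?thesis using y by simp
qed

lemma proximal_iter_Suc: "proximal_iter \<alpha> F x0 (Suc k) = resolvent \<alpha> F (proximal_iter \<alpha> F x0 k)"
  unfolding proximal_iter_def by simp

context norm_fun
begin

lemma resolvent_bij:
  assumes "continuous_on UNIV F" "monotone_wrt N F c" "0 \<le> \<alpha>"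
  shows "bij (\<lambda>y. y + \<alpha> *\<^sub>R F y)"
proof (rule expanding_bij)
  show "continuous_on UNIV (\<lambda>y. y + \<alpha> *\<^sub>R F y)"
    using assms(1) by (intro continuous_intros) auto
  show "1 + \<alpha> * c > 0" using assms(2,3) unfolding monotone_wrt_def by (simp add: add_pos_nonneg)
qed (rule id_plus_scaled_expanding[OF assms(2,3)])

lemma resolvent_lipschitz:
  assumes "continuous_on UNIV F" "monotone_wrt N F c" "0 \<le> \<alpha>"
  shows "(1 + \<alpha> * c) * N (resolvent \<alpha> F a - resolvent \<alpha> F b) \<le> N (a - b)"
  using id_plus_scaled_expanding[OF assms(2,3), of "resolvent \<alpha> F a" "resolvent \<alpha> F b"]
  by (simp add: resolvent_solves[OF resolvent_bij[OF assms]])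

lemma resolvent_fixed_iff:
  assumes "continuous_on UNIV F" "monotone_wrt N F c" "0 < \<alpha>"
  shows "resolvent \<alpha> F p = p \<longleftrightarrow> F p = 0"
proof -
  have bij: "bij (\<lambda>y. y + \<alpha> *\<^sub>R F y)"
    using resolvent_bij[OF assms(1,2) less_imp_le[OF assms(3)]] .
  show ?thesis
  proof
    assume "resolvent \<alpha> F p = p"
    then show "F p = 0" using resolvent_solves[OF bij, of p] assms(3) by simp
  next
    assume "F p = 0"
    then show "resolvent \<alpha> F p = p" by (intro resolvent_eqI[OF bij]) simp
  qed
qed

theorem proximal_point_strongly_monotone:
  assumes cont: "continuous_on UNIV F" and mono: "monotone_wrt N F c" and "c > 0" "\<alpha> > 0"
  shows "\<exists>xs. F xs = 0 \<and> (\<forall>y. F y = 0 \<longrightarrow> y = xs) \<and> proximal_iter \<alpha> F x0 \<longlonglongrightarrow> xs \<and>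
           (\<forall>k. N (proximal_iter \<alpha> F x0 (Suc k) - xs)
                  \<le> 1 / (1 + \<alpha> * c) * N (proximal_iter \<alpha> F x0 k - xs))"
proof -
  have "bij F" by (rule expanding_bij[OF cont \<open>c > 0\<close> monotone_wrt_expanding[OF mono]])
  then obtain xs where xs: "F xs = 0" using surjD[OF bij_is_surj, of F 0] by auto
  have unique: "y = xs" if "F y = 0" for y
    using injD[OF bij_is_inj[OF \<open>bij F\<close>], of y xs] xs that by simp
  have "resolvent \<alpha> F xs = xs" using resolvent_fixed_iff[OF cont mono \<open>\<alpha> > 0\<close>] xs by simp
  then have lip: "(1 + \<alpha> * c) * N (resolvent \<alpha> F a - xs) \<le> N (a - xs)" for a
    using resolvent_lipschitz[OF cont mono less_imp_le[OF \<open>\<alpha> > 0\<close>], of a xs] by simp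
  define q where "q = 1 / (1 + \<alpha> * c)"
  have "1 < 1 + \<alpha> * c" using mult_pos_pos[OF \<open>\<alpha> > 0\<close> \<open>c > 0\<close>] by simp
  then have "0 \<le> q" "q < 1" unfolding q_def by simp_all
  have step: "N (resolvent \<alpha> F a - xs) \<le> q * N (a - xs)" for a
  proof -
    have "N (resolvent \<alpha> F a - xs) = q * ((1 + \<alpha> * c) * N (resolvent \<alpha> F a - xs))"
      unfolding q_def using \<open>1 < 1 + \<alpha> * c\<close> by simp
    also have "\<dots> \<le> q * N (a - xs)" using lip \<open>0 \<le> q\<close> by (rule mult_left_mono)
    finally show ?thesis .
  qed
  then have contraction:
      "N (proximal_iter \<alpha> F x0 (Suc k) - xs) \<le> q * N (proximal_iter \<alpha> F x0 k - xs)"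
    for k unfolding proximal_iter_Suc .
  have "proximal_iter \<alpha> F x0 \<longlonglongrightarrow> xs"
    using \<open>0 \<le> q\<close> \<open>q < 1\<close> contraction by (rule geometric_decay_tendsto)
  then show ?thesis using xs unique contraction unfolding q_def by blast
qed

end

section \<open>Monotone Lipschitz maps do not increase the norm to first order\<close>

lemma AE_lborel_obtain_in_interval:
  fixes a b :: real
  assumes "AE t in lborel. P t" "a < b"
  obtains t where "a < t" "t < b" "P t"
proof -
  obtain M where M: "{t \<in> space lborel. \<not> P t} \<subseteq> M" "emeasure lborel M = 0" "M \<in> sets lborel"
    using assms(1) by (rule AE_E)
  have "\<not> {a<..<b} \<subseteq> M"
  proof
    assume "{a<..<b} \<subseteq> M"
    then have "emeasure lborel {a<..<b} \<le> emeasure lborel M" by (rule emeasure_mono) (use M in simp)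
    then show False using M(2) assms(2) by simp
  qed
  then obtain t where "a < t" "t < b" "t \<notin> M" by (auto simp: subset_iff)
  moreover have "P t" using M(1) \<open>t \<notin> M\<close> by auto
  ultimately show ?thesis using that by blast
qed

definition nonascent :: "(real^'n \<Rightarrow> real) \<Rightarrow> real^'n \<Rightarrow> real^'n \<Rightarrow> bool" where
  "nonascent N z d \<longleftrightarrow> (\<forall>\<epsilon>>0. \<forall>\<^sub>F t in at_right 0. N (z + t *\<^sub>R d) \<le> N z + \<epsilon> * t)"

lemma nonascentE:
  assumes "nonascent N z d" "\<epsilon> > 0" "s > 0"
  obtains t where "0 < t" "t < s" "N (z + t *\<^sub>R d) \<le> N z + \<epsilon> * t"
proof -
  have "\<forall>\<^sub>F t in at_right 0. N (z + t *\<^sub>R d) \<le> N z + \<epsilon> * t"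
    using assms(1,2) unfolding nonascent_def by blast
  then have "\<forall>\<^sub>F t in at_right 0. t \<in> {0<..<s} \<and> N (z + t *\<^sub>R d) \<le> N z + \<epsilon> * t"
    by (rule eventually_conj[OF eventually_at_right_real[OF \<open>s > 0\<close>]])
  then obtain t where "t \<in> {0<..<s}" "N (z + t *\<^sub>R d) \<le> N z + \<epsilon> * t"
    using eventually_happens'[OF trivial_limit_at_right_real] by blast
  then show ?thesis by (intro that) auto
qed

context norm_fun
begin

lemma convex_chord_le:
  assumes "0 < s" "s \<le> t"
  shows "N (z + s *\<^sub>R d) - N z \<le> s / t * (N (z + t *\<^sub>R d) - N z)"
proof -
  have "z + s *\<^sub>R d = (1 - s / t) *\<^sub>R z + (s / t) *\<^sub>R (z + t *\<^sub>R d)"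
    using assms by (simp add: algebra_simps)
  then have "N (z + s *\<^sub>R d) \<le> (1 - s / t) * N z + s / t * N (z + t *\<^sub>R d)"
    using triangle[of "(1 - s / t) *\<^sub>R z" "(s / t) *\<^sub>R (z + t *\<^sub>R d)"] assms by (simp add: scale)
  then show ?thesis by (simp add: algebra_simps)
qed

lemma secant_le_dini_upper_right:
  assumes "t > 0"
  shows "ereal ((N (z + t *\<^sub>R d) - N z) / t) \<le> dini_upper_right (\<lambda>s. N (z + s *\<^sub>R d)) t"
proof -
  have slope: "(N (z + t *\<^sub>R d) - N z) / t \<le> (N (z + (t + h) *\<^sub>R d) - N (z + t *\<^sub>R d)) / h"
    if "h > 0" for h
  proof -
    have "N (z + t *\<^sub>R d) - N z \<le> t / (t + h) * (N (z + (t + h) *\<^sub>R d) - N z)"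
      using convex_chord_le[of t "t + h"] assms that by simp
    then have "(t + h) * (N (z + t *\<^sub>R d) - N z) \<le> t * (N (z + (t + h) *\<^sub>R d) - N z)"
      using assms that by (simp add: field_simps)
    then have "h * (N (z + t *\<^sub>R d) - N z) \<le> t * (N (z + (t + h) *\<^sub>R d) - N (z + t *\<^sub>R d))"
      by (simp add: algebra_simps)
    then show ?thesis using assms that by (simp add: divide_simps mult.commute)
  qed
  have "\<forall>\<^sub>F h in at_right 0. ereal ((N (z + t *\<^sub>R d) - N z) / t)
      \<le> ereal ((N (z + (t + h) *\<^sub>R d) - N (z + t *\<^sub>R d)) / h)"
    using eventually_at_right_less[of "0::real"] by (rule eventually_mono) (simp add: slope)
  then have "ereal ((N (z + t *\<^sub>R d) - N z) / t)
      \<le> Liminf (at_right 0) (\<lambda>h. ereal ((N (z + (t + h) *\<^sub>R d) - N (z + t *\<^sub>R d)) / h))"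
    by (rule Liminf_bounded)
  also have "\<dots> \<le> dini_upper_right (\<lambda>s. N (z + s *\<^sub>R d)) t"
    unfolding dini_upper_right_def by (intro Liminf_le_Limsup) simp
  finally show ?thesis by (simp add: add.commute)
qed

text \<open>At a point where the curve norm derivative formula holds, a pairing bound
  \<open>w \<le> K * N (z + t d)\<close> bounds the secant slope of \<open>s \<mapsto> N (z + s d)\<close> on \<open>[0, t]\<close> by \<open>K\<close>,
  since for a convex function that slope is below the right Dini derivative at \<open>t\<close>.\<close>
lemma increment_le_of_dini_identity:
  assumes "t > 0" "K \<ge> 0"
    and identity: "ereal (N (z + t *\<^sub>R d)) * dini_upper_right (\<lambda>s. N (z + s *\<^sub>R d)) t = ereal w"
    and "w \<le> K * N (z + t *\<^sub>R d)"
  shows "N (z + t *\<^sub>R d) - N z \<le> K * t"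
proof (cases "N (z + t *\<^sub>R d) = 0")
  case True
  then show ?thesis using nonneg[of z] mult_nonneg_nonneg[OF assms(2) less_imp_le[OF assms(1)]]
    by simp
next
  case False
  then have pos: "N (z + t *\<^sub>R d) > 0" using nonneg less_le by metis
  then obtain r where r: "dini_upper_right (\<lambda>s. N (z + s *\<^sub>R d)) t = ereal r"
    and "r * N (z + t *\<^sub>R d) = w"
    using identity by (cases "dini_upper_right (\<lambda>s. N (z + s *\<^sub>R d)) t") auto
  then have "r * N (z + t *\<^sub>R d) \<le> K * N (z + t *\<^sub>R d)" using assms(4) by simp
  then have "r \<le> K" using pos by (rule mult_right_le_imp_le)
  moreover have "(N (z + t *\<^sub>R d) - N z) / t \<le> r"
    using secant_le_dini_upper_right[OF assms(1), of z d] r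
    by simp
  ultimately have "(N (z + t *\<^sub>R d) - N z) / t \<le> K" by linarith
  then show ?thesis using assms(1) by (simp add: pos_divide_le_eq)
qed

lemma pairing_along_segment_le:
  fixes x y :: "real^'n"
  assumes W: "weak_pairing W" "wp_compatible W N"
    and mono: "\<And>x y. W (- (F x - F y)) (x - y) \<le> 0"
    and lip: "\<And>x y. N (F x - F y) \<le> L * N (x - y)" and "t \<ge> 0"
  defines "d \<equiv> - (F x - F y)"
  shows "W d (x - y + t *\<^sub>R d) \<le> L * t * N d * N (x - y + t *\<^sub>R d)"
proof -
  let ?u = "x - y + t *\<^sub>R d"
  have "d = - (F (x + t *\<^sub>R d) - F y) + (F (x + t *\<^sub>R d) - F x)" unfolding d_def by simp
  then have "W d ?u \<le> W (- (F (x + t *\<^sub>R d) - F y)) ?u + W (F (x + t *\<^sub>R d) - F x) ?u"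
    by (metis weak_pairing_add_left[OF W(1)])
  also have "W (- (F (x + t *\<^sub>R d) - F y)) ?u \<le> 0"
    using mono[of "x + t *\<^sub>R d" y] by (simp add: algebra_simps)
  also have "W (F (x + t *\<^sub>R d) - F x) ?u \<le> N (F (x + t *\<^sub>R d) - F x) * N ?u"
    using abs_le_D1[OF pairing_bound[OF W]] .
  also have "\<dots> \<le> L * (t * N d) * N ?u"
    using lip[of "x + t *\<^sub>R d" x] \<open>t \<ge> 0\<close> nonneg[of ?u]
    by (intro mult_right_mono) (simp_all add: scale)
  finally show ?thesis by (simp add: mult.assoc)
qed

lemma increment_along_segment_le:
  assumes W: "weak_pairing W" "wp_compatible W N" "curve_norm_deriv W N"
    and mono: "\<And>x y. W (- (F x - F y)) (x - y) \<le> 0"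
    and lip: "\<And>x y. N (F x - F y) \<le> L * N (x - y)" and "L \<ge> 0" "s > 0"
  obtains t where "0 < t" "t < s"
    "N (x - y + t *\<^sub>R (- (F x - F y))) - N (x - y) \<le> L * t\<^sup>2 * N (F x - F y)"
proof -
  define z d where "z = x - y" and "d = - (F x - F y)"
  have line: "((\<lambda>s. z + s *\<^sub>R d) has_vector_derivative d) (at t)" for t
    by (auto intro!: derivative_eq_intros)
  then have "\<forall>t. (\<lambda>s. z + s *\<^sub>R d) differentiable (at t)" using differentiableI_vector by blast
  then have "AE t in lborel. ereal (N (z + t *\<^sub>R d)) * dini_upper_right (\<lambda>s. N (z + s *\<^sub>R d)) t
      = ereal (W d (z + t *\<^sub>R d))"
    using spec[OF W(3)[unfolded curve_norm_deriv_def], of "\<lambda>s. z + s *\<^sub>R d"]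
    by (simp add: vector_derivative_at[OF line])
  then obtain t where "0 < t" "t < s" and identity:
    "ereal (N (z + t *\<^sub>R d)) * dini_upper_right (\<lambda>s. N (z + s *\<^sub>R d)) t = ereal (W d (z + t *\<^sub>R d))"
    using AE_lborel_obtain_in_interval \<open>s > 0\<close> by blast
  have "W d (z + t *\<^sub>R d) \<le> (L * t * N d) * N (z + t *\<^sub>R d)"
    using pairing_along_segment_le[OF W(1,2) mono lip, of t x y] \<open>0 < t\<close> unfolding z_def d_def
    by simp
  then have "N (z + t *\<^sub>R d) - N z \<le> (L * t * N d) * t"
    using \<open>0 < t\<close> \<open>L \<ge> 0\<close> nonneg[of d]
    by (intro increment_le_of_dini_identity[OF _ _ identity]) simp_all
  then show ?thesis
    using \<open>0 < t\<close> \<open>t < s\<close> minus[of "F x - F y"] unfolding z_def d_def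
    by (intro that) (simp_all add: power2_eq_square mult_ac)
qed

lemma nonascentI_quadratic:
  assumes "K \<ge> 0" and small: "\<And>s. s > 0 \<Longrightarrow> \<exists>t. 0 < t \<and> t < s \<and> N (z + t *\<^sub>R d) - N z \<le> K * t\<^sup>2"
  shows "nonascent N z d"
  unfolding nonascent_def
proof (intro allI impI)
  fix \<epsilon> :: real assume "\<epsilon> > 0"
  then have "\<epsilon> / (K + 1) > 0" using \<open>K \<ge> 0\<close> by simp
  then obtain t where "0 < t" "t < \<epsilon> / (K + 1)" and t: "N (z + t *\<^sub>R d) - N z \<le> K * t\<^sup>2"
    using small by blast
  then have "t * (K + 1) < \<epsilon>" using \<open>K \<ge> 0\<close> by (simp add: pos_less_divide_eq)
  then have "K * t \<le> \<epsilon>" using \<open>0 < t\<close> by (simp add: algebra_simps)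
  have bound: "N (z + r *\<^sub>R d) \<le> N z + \<epsilon> * r" if "0 < r" "r < t" for r
  proof -
    have "N (z + r *\<^sub>R d) - N z \<le> r / t * (N (z + t *\<^sub>R d) - N z)"
      using convex_chord_le that by simp
    also have "\<dots> \<le> r / t * (K * t\<^sup>2)" using t that \<open>0 < t\<close> by (intro mult_left_mono) simp_all
    also have "\<dots> = r * (K * t)" using \<open>0 < t\<close> by (simp add: power2_eq_square)
    also have "\<dots> \<le> r * \<epsilon>" using \<open>K * t \<le> \<epsilon>\<close> that by (intro mult_left_mono) simp_all
    finally show ?thesis by (simp add: mult.commute)
  qed
  show "\<forall>\<^sub>F r in at_right 0. N (z + r *\<^sub>R d) \<le> N z + \<epsilon> * r"
    using eventually_at_right_real[OF \<open>0 < t\<close>] by (rule eventually_mono) (simp add: bound)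
qed

text \<open>Monotonicity alone only bounds the pairing \<open>W d (x - y)\<close>; the curve norm derivative formula
  turns it into a bound on the Dini derivative of \<open>t \<mapsto> N (x - y + t d)\<close>, which is however needed
  at the points \<open>t > 0\<close> of the segment. The Lipschitz bound controls the error made there, and
  convexity propagates the resulting secant bound down to \<open>t = 0\<close>.\<close>
lemma monotone_wrt_lipschitz_nonascent:
  assumes "monotone_wrt N F c" and lip: "\<And>x y. N (F x - F y) \<le> L * N (x - y)"
  shows "nonascent N (x - y) (- (F x - F y))"
proof -
  obtain W where W: "weak_pairing W" "wp_compatible W N" "curve_norm_deriv W N"
    and "c \<ge> 0" and c_mono: "\<And>x y. c * (N (x - y))\<^sup>2 \<le> - W (- (F x - F y)) (x - y)"
    using assms(1) unfolding monotone_wrt_def by blast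
  have mono: "W (- (F x - F y)) (x - y) \<le> 0" for x y
    using c_mono[of x y] mult_nonneg_nonneg[OF \<open>c \<ge> 0\<close> zero_le_power2[of "N (x - y)"]] by linarith
  define M where "M = max L 0"
  have "M \<ge> 0" unfolding M_def by simp
  have lip': "N (F x - F y) \<le> M * N (x - y)" for x y
    using lip[of x y] mult_right_mono[OF max.cobounded1[of L 0] nonneg[of "x - y"]] unfolding M_def
    by linarith
  show ?thesis
  proof (rule nonascentI_quadratic)
    show "0 \<le> M * N (F x - F y)" using \<open>M \<ge> 0\<close> nonneg by simp
    fix s :: real assume "s > 0"
    then obtain t where "0 < t" "t < s"
      "N (x - y + t *\<^sub>R (- (F x - F y))) - N (x - y) \<le> M * t\<^sup>2 * N (F x - F y)"
      by (rule increment_along_segment_le[OF W mono lip' \<open>M \<ge> 0\<close>])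
    then show "\<exists>t. 0 < t \<and> t < s \<and>
        N (x - y + t *\<^sub>R (- (F x - F y))) - N (x - y) \<le> M * N (F x - F y) * t\<^sup>2"
      by (intro exI[of _ t]) (simp add: mult_ac)
  qed
qed

end

section \<open>Weighted \<open>\<ell>\<^sub>1\<close> and \<open>\<ell>\<^sub>\<infinity>\<close> norms\<close>

lemma wlinf_le_iff: "wlinf \<eta> x \<le> B \<longleftrightarrow> (\<forall>i. \<bar>x $ i\<bar> / \<eta> $ i \<le> B)"
  unfolding wlinf_def by (simp add: Max_le_iff)

lemma component_le_wlinf: "\<bar>x $ i\<bar> / \<eta> $ i \<le> wlinf \<eta> x"
  using wlinf_le_iff[of \<eta> x "wlinf \<eta> x"] by blast

lemma wlinf_attained: "\<exists>j. wlinf \<eta> x = \<bar>x $ j\<bar> / \<eta> $ j"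
proof -
  have "wlinf \<eta> x \<in> range (\<lambda>i. \<bar>x $ i\<bar> / \<eta> $ i)" unfolding wlinf_def by (rule Max_in) auto
  then show ?thesis by auto
qed

lemma norm_fun_wlinf:
  assumes pos: "\<forall>i. \<eta> $ i > 0"
  shows "norm_fun (wlinf \<eta>)"
  unfolding norm_fun_def is_norm_fun_def
proof (intro conjI allI)
  fix x :: "real^'a"
  obtain j where j: "wlinf \<eta> x = \<bar>x $ j\<bar> / \<eta> $ j" using wlinf_attained by blast
  show "0 \<le> wlinf \<eta> x" unfolding j using pos by (simp add: less_imp_le)
  show "wlinf \<eta> x = 0 \<longleftrightarrow> x = 0"
  proof
    assume "wlinf \<eta> x = 0"
    then have le: "\<bar>x $ i\<bar> / \<eta> $ i \<le> 0" for i using wlinf_le_iff[of \<eta> x 0] by simp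
    have "x $ i = 0" for i using le[of i] pos[rule_format, of i] by (simp add: divide_le_0_iff)
    then show "x = 0" by (simp add: vec_eq_iff)
  next
    assume "x = 0"
    then show "wlinf \<eta> x = 0" unfolding j by simp
  qed
next
  fix a :: real and x :: "real^'a"
  obtain j where j: "wlinf \<eta> (a *\<^sub>R x) = \<bar>(a *\<^sub>R x) $ j\<bar> / \<eta> $ j" using wlinf_attained by blast
  obtain k where k: "wlinf \<eta> x = \<bar>x $ k\<bar> / \<eta> $ k" using wlinf_attained by blast
  have "wlinf \<eta> (a *\<^sub>R x) = \<bar>a\<bar> * (\<bar>x $ j\<bar> / \<eta> $ j)" unfolding j by (simp add: abs_mult)
  also have "\<dots> \<le> \<bar>a\<bar> * wlinf \<eta> x" by (intro mult_left_mono component_le_wlinf) simp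
  finally have "wlinf \<eta> (a *\<^sub>R x) \<le> \<bar>a\<bar> * wlinf \<eta> x" .
  moreover have "\<bar>a\<bar> * wlinf \<eta> x \<le> wlinf \<eta> (a *\<^sub>R x)"
    using component_le_wlinf[of "a *\<^sub>R x" k \<eta>] unfolding k by (simp add: abs_mult)
  ultimately show "wlinf \<eta> (a *\<^sub>R x) = \<bar>a\<bar> * wlinf \<eta> x" by simp
next
  fix x y :: "real^'a"
  show "wlinf \<eta> (x + y) \<le> wlinf \<eta> x + wlinf \<eta> y"
    unfolding wlinf_le_iff
  proof
    fix i
    have "\<bar>(x + y) $ i\<bar> / \<eta> $ i \<le> \<bar>x $ i\<bar> / \<eta> $ i + \<bar>y $ i\<bar> / \<eta> $ i"
      using divide_right_mono[OF abs_triangle_ineq[of "x $ i" "y $ i"], of "\<eta> $ i"]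
        pos[rule_format, of i]
      by (simp add: add_divide_distrib)
    also have "\<dots> \<le> wlinf \<eta> x + wlinf \<eta> y" by (intro add_mono component_le_wlinf)
    finally show "\<bar>(x + y) $ i\<bar> / \<eta> $ i \<le> wlinf \<eta> x + wlinf \<eta> y" .
  qed
qed

lemma wlinf_axis:
  assumes "\<forall>i. \<eta> $ i > 0"
  shows "wlinf \<eta> (axis i c) = \<bar>c\<bar> / \<eta> $ i"
proof (rule antisym)
  show "wlinf \<eta> (axis i c) \<le> \<bar>c\<bar> / \<eta> $ i"
    unfolding wlinf_le_iff using assms by (auto simp: axis_def less_imp_le)
  show "\<bar>c\<bar> / \<eta> $ i \<le> wlinf \<eta> (axis i c)"
    using component_le_wlinf[of "axis i c" i \<eta>] by (simp add: axis_def)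
qed

lemma wl1_split: "wl1 \<eta> x = \<eta> $ k * \<bar>x $ k\<bar> + (\<Sum>i\<in>UNIV - {k}. \<eta> $ i * \<bar>x $ i\<bar>)"
  unfolding wl1_def by (rule sum.remove) auto

lemma norm_fun_wl1:
  assumes pos: "\<forall>i. \<eta> $ i > 0"
  shows "norm_fun (wl1 \<eta>)"
  unfolding norm_fun_def is_norm_fun_def
proof (intro conjI allI)
  fix x :: "real^'a"
  have nonneg: "\<forall>i\<in>UNIV. 0 \<le> \<eta> $ i * \<bar>x $ i\<bar>" using pos by (simp add: less_imp_le)
  then show "0 \<le> wl1 \<eta> x" unfolding wl1_def by (simp add: sum_nonneg)
  show "wl1 \<eta> x = 0 \<longleftrightarrow> x = 0"
  proof
    assume "wl1 \<eta> x = 0"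
    then have zero: "\<forall>i\<in>UNIV. \<eta> $ i * \<bar>x $ i\<bar> = 0"
      unfolding wl1_def by (subst (asm) sum_nonneg_eq_0_iff) (use nonneg in auto)
    have "x $ i = 0" for i using zero[rule_format, of i] pos[rule_format, of i] by simp
    then show "x = 0" by (simp add: vec_eq_iff)
  qed (simp add: wl1_def)
next
  fix a :: real and x :: "real^'a"
  show "wl1 \<eta> (a *\<^sub>R x) = \<bar>a\<bar> * wl1 \<eta> x"
    unfolding wl1_def by (simp add: sum_distrib_left abs_mult mult_ac)
next
  fix x y :: "real^'a"
  have "\<eta> $ i * \<bar>(x + y) $ i\<bar> \<le> \<eta> $ i * \<bar>x $ i\<bar> + \<eta> $ i * \<bar>y $ i\<bar>" for i
    using mult_left_mono[OF abs_triangle_ineq[of "x $ i" "y $ i"], of "\<eta> $ i"] pos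
    by (simp add: distrib_left less_imp_le)
  then show "wl1 \<eta> (x + y) \<le> wl1 \<eta> x + wl1 \<eta> y"
    unfolding wl1_def sum.distrib[symmetric] by (rule sum_mono)
qed

lemma component_le_wl1: "\<forall>i. \<eta> $ i > 0 \<Longrightarrow> \<eta> $ k * \<bar>x $ k\<bar> \<le> wl1 \<eta> x"
  unfolding wl1_split[of \<eta> x k] by (auto intro!: sum_nonneg simp: less_imp_le)

lemma wl1_axis: "wl1 \<eta> (axis k c) = \<eta> $ k * \<bar>c\<bar>"
  unfolding wl1_split[of \<eta> _ k] by (simp add: axis_def)

lemma wl1_add_axis:
  assumes "u $ k = 0"
  shows "wl1 \<eta> (u + axis k c) = wl1 \<eta> u + \<eta> $ k * \<bar>c\<bar>"
proof -
  have "(\<Sum>i\<in>UNIV - {k}. \<eta> $ i * \<bar>(u + axis k c) $ i\<bar>) = (\<Sum>i\<in>UNIV - {k}. \<eta> $ i * \<bar>u $ i\<bar>)"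
    by (rule sum.cong) (auto simp: axis_def)
  then show ?thesis unfolding wl1_split[of \<eta> _ k] using assms by (simp add: axis_def)
qed

lemma abs_add_same_sign:
  fixes a b t :: real
  assumes "a * b > 0" "t \<ge> 0"
  shows "\<bar>a + t * b\<bar> = \<bar>a\<bar> + t * \<bar>b\<bar>"
proof (cases "a > 0")
  case True
  then have "b > 0" using assms(1) by (simp add: zero_less_mult_iff)
  then show ?thesis using True assms(2) by simp
next
  case False
  then have "a < 0" "b < 0" using assms(1) by (auto simp: zero_less_mult_iff)
  moreover have "t * b \<le> 0" using assms(2) \<open>b < 0\<close> by (simp add: mult_nonneg_nonpos)
  ultimately show ?thesis by simp
qed

lemma abs_add_small:
  fixes a b :: real
  assumes "\<bar>b\<bar> < \<bar>a\<bar>"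
  shows "\<bar>a + b\<bar> = \<bar>a\<bar> + sgn a * b"
  using assms by (cases "a > 0") (auto simp: abs_less_iff sgn_if abs_if)

text \<open>If the maximum of the weighted \<open>\<ell>\<^sub>\<infinity>\<close> norm is attained at \<open>j\<close>, moving along \<open>d\<close>
  increases that coordinate at first order unless \<open>z $ j\<close> and \<open>d $ j\<close> have opposite signs.\<close>
lemma wlinf_nonascent_sign:
  assumes pos: "\<forall>i. \<eta> $ i > 0" and "nonascent (wlinf \<eta>) z d"
    and j: "wlinf \<eta> z = \<bar>z $ j\<bar> / \<eta> $ j"
  shows "z $ j * d $ j \<le> 0"
proof (rule ccontr)
  assume "\<not> ?thesis"
  then have "z $ j * d $ j > 0" by simp
  define a where "a = \<bar>d $ j\<bar> / \<eta> $ j"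
  have "a > 0" using \<open>z $ j * d $ j > 0\<close> pos unfolding a_def by (auto intro!: divide_pos_pos)
  then obtain t where "0 < t" and t: "wlinf \<eta> (z + t *\<^sub>R d) \<le> wlinf \<eta> z + a / 2 * t"
    by (rule nonascentE[OF assms(2) half_gt_zero zero_less_one])
  have "wlinf \<eta> z + t * a = \<bar>(z + t *\<^sub>R d) $ j\<bar> / \<eta> $ j"
    using abs_add_same_sign[OF \<open>z $ j * d $ j > 0\<close> less_imp_le[OF \<open>0 < t\<close>]]
    unfolding j a_def by (simp add: add_divide_distrib)
  also have "\<dots> \<le> wlinf \<eta> (z + t *\<^sub>R d)" by (rule component_le_wlinf)
  finally show False using t mult_pos_pos[OF \<open>0 < t\<close> \<open>a > 0\<close>] by (simp add: mult.commute)
qed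

lemma wl1_nonascent_axis:
  assumes pos: "\<forall>i. \<eta> $ i > 0" and "c \<noteq> 0" and "nonascent (wl1 \<eta>) (axis k c) v"
  shows "\<eta> $ k * (sgn c * v $ k) + (\<Sum>i\<in>UNIV - {k}. \<eta> $ i * \<bar>v $ i\<bar>) \<le> 0"
    (is "?A \<le> 0")
proof (rule ccontr)
  assume "\<not> ?A \<le> 0"
  define A where "A = ?A"
  have "A > 0" using \<open>\<not> ?A \<le> 0\<close> unfolding A_def by simp
  have "\<bar>v $ k\<bar> + 1 > 0" using abs_ge_zero[of "v $ k"] by linarith
  then have "\<bar>c\<bar> / (\<bar>v $ k\<bar> + 1) > 0" using \<open>c \<noteq> 0\<close> by simp
  then obtain t where "0 < t" "t < \<bar>c\<bar> / (\<bar>v $ k\<bar> + 1)"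
    and t: "wl1 \<eta> (axis k c + t *\<^sub>R v) \<le> wl1 \<eta> (axis k c) + A / 2 * t"
    by (rule nonascentE[OF assms(3) half_gt_zero[OF \<open>A > 0\<close>]])
  then have "t * (\<bar>v $ k\<bar> + 1) < \<bar>c\<bar>" using \<open>\<bar>v $ k\<bar> + 1 > 0\<close> by (simp add: pos_less_divide_eq)
  then have "\<bar>t * v $ k\<bar> < \<bar>c\<bar>" using \<open>0 < t\<close> by (simp add: abs_mult algebra_simps)
  then have "\<bar>c + t * v $ k\<bar> = \<bar>c\<bar> + t * (sgn c * v $ k)"
    using abs_add_small by (simp add: mult.left_commute)
  moreover have "(\<Sum>i\<in>UNIV - {k}. \<eta> $ i * \<bar>(axis k c + t *\<^sub>R v) $ i\<bar>)
      = t * (\<Sum>i\<in>UNIV - {k}. \<eta> $ i * \<bar>v $ i\<bar>)"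
    unfolding sum_distrib_left using \<open>0 < t\<close> by (intro sum.cong) (auto simp: axis_def abs_mult)
  ultimately have "wl1 \<eta> (axis k c + t *\<^sub>R v) = wl1 \<eta> (axis k c) + t * A"
    unfolding wl1_split[of \<eta> _ k] A_def by (simp add: axis_def algebra_simps)
  then show False using t mult_pos_pos[OF \<open>0 < t\<close> \<open>A > 0\<close>] by (simp add: mult.commute)
qed

text \<open>To bound the \<open>i\<close>-th coordinate, raise \<open>x $ i\<close> until that coordinate of \<open>x - y\<close>
  attains the weighted maximum; the sign condition there and the Lipschitz bound on the raise
  give the claim.\<close>
lemma wlinf_forward_step_component_le:
  fixes F :: "real^'n \<Rightarrow> real^'n"
  assumes pos: "\<forall>i. \<eta> $ i > 0"
    and nonascent: "\<And>x y. nonascent (wlinf \<eta>) (x - y) (- (F x - F y))"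
    and lip: "\<And>x y. wlinf \<eta> (F x - F y) \<le> L * wlinf \<eta> (x - y)" and "L > 0"
  shows "(x - y) $ i - (1 / L) * (F x - F y) $ i \<le> \<eta> $ i * wlinf \<eta> (x - y)"
proof -
  interpret wlinf: norm_fun "wlinf \<eta>" by (rule norm_fun_wlinf[OF pos])
  define M where "M = wlinf \<eta> (x - y)"
  have "\<eta> $ i > 0" using pos by blast
  have "\<bar>(x - y) $ i\<bar> \<le> \<eta> $ i * M"
    using component_le_wlinf[of "x - y" i \<eta>] \<open>\<eta> $ i > 0\<close> unfolding M_def
    by (simp add: pos_divide_le_eq mult.commute)
  show ?thesis
  proof (cases "M = 0")
    case True
    then show ?thesis unfolding M_def using wlinf.eq_0_iff by simp
  next
    case False
    then have "M > 0" using wlinf.nonneg unfolding M_def by (simp add: less_le)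
    define c where "c = \<eta> $ i * M - (x - y) $ i"
    have "c \<ge> 0" unfolding c_def using \<open>\<bar>(x - y) $ i\<bar> \<le> \<eta> $ i * M\<close> by simp
    define x' where "x' = x + axis i c"
    have w_i: "(x' - y) $ i = \<eta> $ i * M" unfolding x'_def c_def by (simp add: axis_def)
    have "wlinf \<eta> (x' - y) = \<bar>(x' - y) $ i\<bar> / \<eta> $ i"
    proof (rule antisym)
      show "wlinf \<eta> (x' - y) \<le> \<bar>(x' - y) $ i\<bar> / \<eta> $ i"
        unfolding wlinf_le_iff
      proof
        fix j
        show "\<bar>(x' - y) $ j\<bar> / \<eta> $ j \<le> \<bar>(x' - y) $ i\<bar> / \<eta> $ i"
        proof (cases "j = i")
          case False
          then have "(x' - y) $ j = (x - y) $ j" unfolding x'_def by (simp add: axis_def)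
          then show ?thesis
            using component_le_wlinf[of "x - y" j \<eta>] w_i \<open>\<eta> $ i > 0\<close> \<open>M > 0\<close> unfolding M_def by simp
        qed simp
      qed
    qed (rule component_le_wlinf)
    then have "(x' - y) $ i * (- (F x' - F y)) $ i \<le> 0"
      by (rule wlinf_nonascent_sign[OF pos nonascent])
    moreover have "(x' - y) $ i > 0" using w_i \<open>\<eta> $ i > 0\<close> \<open>M > 0\<close> by simp
    ultimately have "(F x' - F y) $ i \<ge> 0" by (simp add: mult_le_0_iff)
    have "\<bar>(F x' - F x) $ i\<bar> / \<eta> $ i \<le> L * (c / \<eta> $ i)"
      using component_le_wlinf[of "F x' - F x" i \<eta>] lip[of x' x] wlinf_axis[OF pos, of i c] \<open>c \<ge> 0\<close>
      unfolding x'_def by simp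
    then have "(F x' - F x) $ i \<le> L * c"
      using \<open>\<eta> $ i > 0\<close> by (simp add: divide_le_eq_1 pos_divide_le_eq)
    then have "(1 / L) * (F x - F y) $ i \<ge> - c"
      using \<open>(F x' - F y) $ i \<ge> 0\<close> \<open>L > 0\<close> by (simp add: field_simps)
    then show ?thesis unfolding c_def M_def by simp
  qed
qed

lemma wlinf_forward_step_nonexpansive:
  fixes F :: "real^'n \<Rightarrow> real^'n"
  assumes pos: "\<forall>i. \<eta> $ i > 0"
    and nonascent: "\<And>x y. nonascent (wlinf \<eta>) (x - y) (- (F x - F y))"
    and lip: "\<And>x y. wlinf \<eta> (F x - F y) \<le> L * wlinf \<eta> (x - y)" and "L > 0"
  shows "wlinf \<eta> ((x - (1 / L) *\<^sub>R F x) - (y - (1 / L) *\<^sub>R F y)) \<le> wlinf \<eta> (x - y)"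
  unfolding wlinf_le_iff
proof
  fix i
  interpret wlinf: norm_fun "wlinf \<eta>" by (rule norm_fun_wlinf[OF pos])
  have "\<eta> $ i > 0" using pos by blast
  have "\<bar>((x - (1 / L) *\<^sub>R F x) - (y - (1 / L) *\<^sub>R F y)) $ i\<bar> \<le> \<eta> $ i * wlinf \<eta> (x - y)"
    using wlinf_forward_step_component_le[OF pos nonascent lip \<open>L > 0\<close>, of x y i]
      wlinf_forward_step_component_le[OF pos nonascent lip \<open>L > 0\<close>, of y x i]
      wlinf.minus_commute[of x y]
    by (simp add: abs_le_iff algebra_simps)
  then show "\<bar>((x - (1 / L) *\<^sub>R F x) - (y - (1 / L) *\<^sub>R F y)) $ i\<bar> / \<eta> $ i \<le> wlinf \<eta> (x - y)"
    using \<open>\<eta> $ i > 0\<close> by (simp add: pos_divide_le_eq mult.commute)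
qed

text \<open>Changing a single coordinate: the sign condition at \<open>axis k c\<close> makes the \<open>k\<close>-th
  coordinate of the forward step shrink by exactly the mass that the step adds to the others.\<close>
lemma wl1_forward_step_axis_le:
  fixes F :: "real^'n \<Rightarrow> real^'n"
  assumes pos: "\<forall>i. \<eta> $ i > 0"
    and nonascent: "\<And>x y. nonascent (wl1 \<eta>) (x - y) (- (F x - F y))"
    and lip: "\<And>x y. wl1 \<eta> (F x - F y) \<le> L * wl1 \<eta> (x - y)" and "L > 0"
  shows "wl1 \<eta> (axis k c - (1 / L) *\<^sub>R (F (p + axis k c) - F p)) \<le> \<eta> $ k * \<bar>c\<bar>"
proof (cases "c = 0")
  case True
  then have "axis k c = 0" by simp
  then show ?thesis using norm_fun.zero[OF norm_fun_wl1[OF pos]] True by (simp del: axis_eq_0_iff)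
next
  case False
  define D where "D = F (p + axis k c) - F p"
  define S where "S = (\<Sum>i\<in>UNIV - {k}. \<eta> $ i * \<bar>D $ i\<bar>)"
  have "\<eta> $ k > 0" using pos by blast
  have "S \<ge> 0" unfolding S_def using pos by (intro sum_nonneg) (simp add: less_imp_le)
  have "nonascent (wl1 \<eta>) (axis k c) (- D)"
    using nonascent[of "p + axis k c" p] unfolding D_def by simp
  from wl1_nonascent_axis[OF pos False this] have "S \<le> \<eta> $ k * (sgn c * D $ k)"
    unfolding S_def by simp
  then have "\<eta> $ k * 0 \<le> \<eta> $ k * (sgn c * D $ k)" using \<open>S \<ge> 0\<close> by simp
  then have "sgn c * D $ k \<ge> 0" using mult_le_cancel_left_pos[OF \<open>\<eta> $ k > 0\<close>] by blast
  have "\<eta> $ k * \<bar>D $ k\<bar> \<le> \<eta> $ k * (L * \<bar>c\<bar>)"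
    using component_le_wl1[OF pos, of k D] lip[of "p + axis k c" p] unfolding D_def
    by (simp add: wl1_axis mult_ac)
  then have "(1 / L) * \<bar>D $ k\<bar> \<le> \<bar>c\<bar>"
    using \<open>\<eta> $ k > 0\<close> \<open>L > 0\<close> by (simp add: field_simps)
  then have "\<bar>(axis k c - (1 / L) *\<^sub>R D) $ k\<bar> = \<bar>c\<bar> - (1 / L) * (sgn c * D $ k)"
    using \<open>sgn c * D $ k \<ge> 0\<close> \<open>L > 0\<close> False
    by (cases "c > 0") (auto simp: axis_def sgn_if zero_le_mult_iff abs_mult)
  moreover have "(\<Sum>i\<in>UNIV - {k}. \<eta> $ i * \<bar>(axis k c - (1 / L) *\<^sub>R D) $ i\<bar>) = (1 / L) * S"
    unfolding S_def sum_distrib_left using \<open>L > 0\<close>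
    by (intro sum.cong) (auto simp: axis_def abs_mult)
  ultimately have "wl1 \<eta> (axis k c - (1 / L) *\<^sub>R D)
      = \<eta> $ k * (\<bar>c\<bar> - (1 / L) * (sgn c * D $ k)) + (1 / L) * S"
    by (simp only: wl1_split[of \<eta> _ k])
  also have "\<dots> \<le> \<eta> $ k * \<bar>c\<bar>"
    using mult_left_mono[OF \<open>S \<le> \<eta> $ k * (sgn c * D $ k)\<close>, of "1 / L"] \<open>L > 0\<close>
    by (simp add: algebra_simps)
  finally show ?thesis unfolding D_def .
qed

text \<open>Change the coordinates of \<open>y\<close> into those of \<open>x\<close> one at a time; the forward-step
  differences telescope and each one is bounded by the single-coordinate estimate.\<close>
lemma wl1_forward_step_nonexpansive:
  fixes F :: "real^'n \<Rightarrow> real^'n"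
  assumes pos: "\<forall>i. \<eta> $ i > 0"
    and nonascent: "\<And>x y. nonascent (wl1 \<eta>) (x - y) (- (F x - F y))"
    and lip: "\<And>x y. wl1 \<eta> (F x - F y) \<le> L * wl1 \<eta> (x - y)" and "L > 0"
  shows "wl1 \<eta> ((x - (1 / L) *\<^sub>R F x) - (y - (1 / L) *\<^sub>R F y)) \<le> wl1 \<eta> (x - y)"
proof -
  interpret wl1: norm_fun "wl1 \<eta>" by (rule norm_fun_wl1[OF pos])
  define p where "p S = y + (\<chi> j. if j \<in> S then (x - y) $ j else 0)" for S
  define g where "g = 1 / L"
  have telescope: "wl1 \<eta> (p S - y - g *\<^sub>R (F (p S) - F y)) \<le> wl1 \<eta> (p S - y)" if "finite S" for S
    using that
  proof (induction S rule: finite_induct)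
    case empty
    have "p {} = y" unfolding p_def by (simp add: vec_eq_iff)
    then show ?case by simp
  next
    case (insert k S)
    define c where "c = (x - y) $ k"
    have p_insert: "p (insert k S) = p S + axis k c"
      unfolding p_def c_def using insert(2) by (auto simp: vec_eq_iff axis_def)
    have "(p S - y) $ k = 0" unfolding p_def using insert(2) by simp
    have "p (insert k S) - y - g *\<^sub>R (F (p (insert k S)) - F y)
        = (p S - y - g *\<^sub>R (F (p S) - F y)) + (axis k c - g *\<^sub>R (F (p S + axis k c) - F (p S)))"
      unfolding p_insert by (simp add: algebra_simps)
    then have "wl1 \<eta> (p (insert k S) - y - g *\<^sub>R (F (p (insert k S)) - F y))
        \<le> wl1 \<eta> (p S - y - g *\<^sub>R (F (p S) - F y))
          + wl1 \<eta> (axis k c - g *\<^sub>R (F (p S + axis k c) - F (p S)))"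
      by (simp only: wl1.triangle)
    also have "\<dots> \<le> wl1 \<eta> (p S - y) + \<eta> $ k * \<bar>c\<bar>"
      using insert(3) wl1_forward_step_axis_le[OF pos nonascent lip \<open>L > 0\<close>, of k c "p S"]
      unfolding g_def by linarith
    also have "\<dots> = wl1 \<eta> (p (insert k S) - y)"
      unfolding p_insert using wl1_add_axis[OF \<open>(p S - y) $ k = 0\<close>] by (simp add: algebra_simps)
    finally show ?case .
  qed
  have "p UNIV = x" unfolding p_def by (simp add: vec_eq_iff)
  then show ?thesis using telescope[of UNIV] unfolding g_def by (simp add: algebra_simps)
qed

section \<open>The Krasnoselskii-Mann iteration\<close>

locale krasnoselskii_mann = norm_fun N for N :: "real^'n \<Rightarrow> real" +
  fixes T :: "real^'n \<Rightarrow> real^'n" and \<theta> :: real and x :: "nat \<Rightarrow> real^'n"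
  assumes nonexpansive: "\<And>a b. N (T a - T b) \<le> N (a - b)"
    and \<theta>: "0 < \<theta>" "\<theta> < 1"
    and iterate: "\<And>k. x (Suc k) = (1 - \<theta>) *\<^sub>R x k + \<theta> *\<^sub>R T (x k)"
begin

definition residual :: "nat \<Rightarrow> real" where "residual k = N (x k - T (x k))"

lemma residual_nonneg: "residual k \<ge> 0"
  unfolding residual_def by (rule nonneg)

lemma step_eq: "N (x (Suc k) - x k) = \<theta> * residual k"
proof -
  have "x (Suc k) - x k = \<theta> *\<^sub>R (T (x k) - x k)" unfolding iterate by (simp add: algebra_simps)
  then show ?thesis using \<theta> minus_commute[of "T (x k)" "x k"] unfolding residual_def
    by (simp add: scale)
qed

lemma residual_Suc_le: "residual (Suc k) \<le> residual k"
proof -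
  have "x (Suc k) - T (x (Suc k)) = (1 - \<theta>) *\<^sub>R (x k - T (x k)) + (T (x k) - T (x (Suc k)))"
    using iterate[of k] by (simp add: algebra_simps)
  then have "residual (Suc k) \<le> N ((1 - \<theta>) *\<^sub>R (x k - T (x k))) + N (T (x k) - T (x (Suc k)))"
    unfolding residual_def by (simp only: triangle)
  also have "\<dots> \<le> (1 - \<theta>) * residual k + N (x (Suc k) - x k)"
    using nonexpansive[of "x k" "x (Suc k)"] minus_commute[of "x k" "x (Suc k)"] \<theta>
    unfolding residual_def by (simp add: scale)
  finally show ?thesis using step_eq[of k] by (simp add: algebra_simps)
qed

lemma decseq_residual: "decseq residual"
  using residual_Suc_le by (simp add: decseq_SucI)

lemma dist_fixed_point_Suc_le:
  assumes "T p = p"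
  shows "N (x (Suc k) - p) \<le> N (x k - p)"
proof -
  have "x (Suc k) - p = (1 - \<theta>) *\<^sub>R (x k - p) + \<theta> *\<^sub>R (T (x k) - T p)"
    unfolding iterate assms by (simp add: algebra_simps)
  then have "N (x (Suc k) - p) \<le> (1 - \<theta>) * N (x k - p) + \<theta> * N (T (x k) - T p)"
    using triangle[of "(1 - \<theta>) *\<^sub>R (x k - p)" "\<theta> *\<^sub>R (T (x k) - T p)"] \<theta> by (simp add: scale)
  also have "\<dots> \<le> (1 - \<theta>) * N (x k - p) + \<theta> * N (x k - p)"
    using nonexpansive[of "x k" p] \<theta> by simp
  finally show ?thesis by (simp add: algebra_simps)
qed

lemma dist_fixed_point_le:
  assumes "T p = p"
  shows "N (x k - p) \<le> N (x 0 - p)"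
proof (induction k)
  case (Suc k)
  then show ?case using dist_fixed_point_Suc_le[OF assms, of k] by linarith
qed simp

lemma dist_iterates_le: "N (x (i + m) - x i) \<le> \<theta> * m * residual i"
proof (induction m)
  case (Suc m)
  have "N (x (i + Suc m) - x i) \<le> N (x (Suc (i + m)) - x (i + m)) + N (x (i + m) - x i)"
    using triangle_diff by simp
  also have "\<dots> \<le> \<theta> * residual i + \<theta> * m * residual i"
  proof -
    have "residual (i + m) \<le> residual i" using decseq_residual by (simp add: decseq_def)
    then have "\<theta> * residual (i + m) \<le> \<theta> * residual i" using \<theta> by simp
    then show ?thesis using step_eq[of "i + m"] Suc by simp
  qed
  finally show ?case by (simp add: algebra_simps)
qed simp

lemma one_plus_mult_le_power:
  "1 + n * \<theta> \<le> (1 / (1 - \<theta>)) ^ n"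
proof -
  have "(1 + \<theta>) * (1 - \<theta>) \<le> 1" by (simp add: algebra_simps)
  then have "1 + \<theta> \<le> 1 / (1 - \<theta>)" using \<theta> by (simp add: pos_le_divide_eq)
  have "1 + n * \<theta> \<le> (1 + \<theta>) ^ n" using Bernoulli_inequality[of \<theta> n] \<theta> by simp
  also have "\<dots> \<le> (1 / (1 - \<theta>)) ^ n" using \<open>1 + \<theta> \<le> 1 / (1 - \<theta>)\<close> \<theta> by (intro power_mono) simp_all
  finally show ?thesis .
qed

text \<open>Ishikawa's inequality; the induction on \<open>n\<close> must be carried out for all starting
  indices \<open>i\<close> at once.\<close>
lemma ishikawa_inequality:
  "(1 + n * \<theta>) * residual i + (1 / (1 - \<theta>)) ^ n * (residual (i + n) - residual i)
    \<le> N (T (x (i + n)) - x i)"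
proof (induction n arbitrary: i)
  case 0
  then show ?case unfolding residual_def using minus_commute by simp
next
  case (Suc n)
  define a A u where "a = 1 / (1 - \<theta>)" and "A = a ^ n" and "u = T (x (i + Suc n))"
  have "a * (1 - \<theta>) = 1" using \<theta> by (simp add: a_def)
  have "A \<ge> 1 + n * \<theta>" unfolding A_def a_def by (rule one_plus_mult_le_power)
  have "u - x (Suc i) = (1 - \<theta>) *\<^sub>R (u - x i) + \<theta> *\<^sub>R (u - T (x i))"
    unfolding iterate by (simp add: algebra_simps)
  then have "N (u - x (Suc i)) \<le> (1 - \<theta>) * N (u - x i) + \<theta> * N (u - T (x i))"
    using triangle[of "(1 - \<theta>) *\<^sub>R (u - x i)" "\<theta> *\<^sub>R (u - T (x i))"] \<theta> by (simp add: scale)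
  moreover have "N (u - T (x i)) \<le> \<theta> * Suc n * residual i"
    using nonexpansive[of "x (i + Suc n)" "x i"] dist_iterates_le[of i "Suc n"] unfolding u_def
    by simp
  moreover have "(1 + n * \<theta>) * residual (Suc i) + A * (residual (i + Suc n) - residual (Suc i))
      \<le> N (u - x (Suc i))"
    using Suc[of "Suc i"] unfolding u_def A_def a_def by simp
  moreover have "(A - (1 + n * \<theta>)) * (residual i - residual (Suc i)) \<ge> 0"
    using \<open>A \<ge> 1 + n * \<theta>\<close> residual_Suc_le[of i] by simp
  ultimately have key:
      "(1 - \<theta>) * ((1 + Suc n * \<theta>) * residual i) + A * (residual (i + Suc n) - residual i)
      \<le> (1 - \<theta>) * N (u - x i)"
    using mult_left_mono[of "N (u - T (x i))" "\<theta> * Suc n * residual i" \<theta>] \<theta>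
    by (simp add: algebra_simps)
  have "(1 - \<theta>) * ((1 + Suc n * \<theta>) * residual i + a * A * (residual (i + Suc n) - residual i))
      = (1 - \<theta>) * ((1 + Suc n * \<theta>) * residual i)
        + (a * (1 - \<theta>)) * A * (residual (i + Suc n) - residual i)"
    by (simp add: algebra_simps)
  also have "\<dots> \<le> (1 - \<theta>) * N (u - x i)" using key \<open>a * (1 - \<theta>) = 1\<close> by simp
  finally have "(1 + Suc n * \<theta>) * residual i + a * A * (residual (i + Suc n) - residual i)
      \<le> N (u - x i)"
    by (rule mult_left_le_imp_le) (use \<theta> in simp)
  then show ?case unfolding u_def A_def a_def by (simp add: mult.assoc)
qed

lemma dist_image_iterate_le:
  assumes "T p = p"
  shows "N (T (x m) - x i) \<le> 2 * N (x 0 - p)"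
proof -
  have "N (T (x m) - x i) \<le> N (T (x m) - T p) + N (T p - x i)" by (rule triangle_diff)
  also have "\<dots> \<le> N (x m - p) + N (x i - p)"
    using nonexpansive[of "x m" p] minus_commute[of p "x i"] assms by simp
  also have "\<dots> \<le> 2 * N (x 0 - p)"
    using dist_fixed_point_le[OF assms, of m] dist_fixed_point_le[OF assms, of i] by simp
  finally show ?thesis .
qed

text \<open>The residuals decrease, and by Ishikawa's inequality their limit \<open>r\<close> satisfies
  \<open>(1 + n \<theta>) r \<le> 2 N (x 0 - p)\<close> for every \<open>n\<close>.\<close>
lemma residual_tendsto_0:
  assumes "T p = p"
  shows "residual \<longlonglongrightarrow> 0"
proof -
  define R where "R = N (x 0 - p)"
  note bounded = dist_image_iterate_le[OF assms, folded R_def]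
  obtain r where r: "residual \<longlonglongrightarrow> r" "\<And>i. r \<le> residual i"
    using decseq_convergent[OF decseq_residual, of 0] residual_nonneg by blast
  have "r \<ge> 0" using r(1) residual_nonneg by (intro LIMSEQ_le_const) auto
  have bound: "(1 + n * \<theta>) * r \<le> 2 * R" for n :: nat
  proof -
    define a where "a = (1 / (1 - \<theta>)) ^ n"
    have "(1 + n * \<theta>) * r \<le> 2 * R + a * (residual i - residual (i + n))" for i
    proof -
      have "(1 + n * \<theta>) * r \<le> (1 + n * \<theta>) * residual i" using r(2) \<theta>
        by (intro mult_left_mono) simp_all
      also have "\<dots> \<le> N (T (x (i + n)) - x i) - a * (residual (i + n) - residual i)"
        using ishikawa_inequality[of n i] unfolding a_def by linarith
      also have "\<dots> \<le> 2 * R + a * (residual i - residual (i + n))"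
        using bounded[of "i + n" i] by (simp add: algebra_simps)
      finally show ?thesis .
    qed
    moreover have "(\<lambda>i. 2 * R + a * (residual i - residual (i + n))) \<longlonglongrightarrow> 2 * R + a * (r - r)"
      by (intro tendsto_intros r(1) LIMSEQ_ignore_initial_segment)
    ultimately show ?thesis by (intro LIMSEQ_le_const) auto
  qed
  have "r \<le> 0"
  proof (rule ccontr)
    assume "\<not> r \<le> 0"
    then obtain n :: nat where "2 * R / (r * \<theta>) < n" using reals_Archimedean2 by blast
    then have "2 * R < n * (r * \<theta>)" using \<open>\<not> r \<le> 0\<close> \<theta> by (simp add: pos_divide_less_eq)
    also have "\<dots> \<le> (1 + n * \<theta>) * r" using \<open>\<not> r \<le> 0\<close> by (simp add: algebra_simps)
    finally show False using bound[of n] by simp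
  qed
  then show ?thesis using r(1) \<open>r \<ge> 0\<close> by simp
qed

text \<open>Compactness provides a cluster point \<open>q\<close> of the bounded sequence; it is a fixed point
  because the residuals vanish, and then the whole sequence converges to it by Fejer monotonicity.\<close>
theorem tendsto_fixed_point:
  assumes "T p = p"
  shows "\<exists>q. T q = q \<and> x \<longlonglongrightarrow> q"
proof -
  obtain c where "c > 0" and c: "\<And>y. norm y \<le> c * N y" using norm_le_mult by blast
  have "norm (x k) \<le> c * N (x 0 - p) + norm p" for k
  proof -
    have "norm (x k) \<le> norm (x k - p) + norm p" using norm_triangle_sub[of "x k" p] by simp
    also have "norm (x k - p) \<le> c * N (x k - p)" by (rule c)
    also have "\<dots> \<le> c * N (x 0 - p)" using dist_fixed_point_le[OF assms, of k] \<open>c > 0\<close> by simp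
    finally show ?thesis by simp
  qed
  then have "bounded (range x)" unfolding bounded_iff by blast
  then obtain q \<sigma> where \<sigma>: "strict_mono \<sigma>" "(x \<circ> \<sigma>) \<longlonglongrightarrow> q"
    using bounded_imp_convergent_subsequence by blast
  have "continuous_on UNIV T" by (rule lipschitz_continuous[of T 1]) (simp add: nonexpansive)
  then have "(\<lambda>k. T ((x \<circ> \<sigma>) k)) \<longlonglongrightarrow> T q"
    by (rule continuous_on_tendsto_compose[OF _ \<sigma>(2)]) simp_all
  then have "(\<lambda>k. (x \<circ> \<sigma>) k - T ((x \<circ> \<sigma>) k)) \<longlonglongrightarrow> q - T q" by (intro tendsto_diff \<sigma>(2))
  moreover have "(\<lambda>k. (x \<circ> \<sigma>) k - T ((x \<circ> \<sigma>) k)) \<longlonglongrightarrow> 0"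
    unfolding LIMSEQ_N_iff using LIMSEQ_subseq_LIMSEQ[OF residual_tendsto_0[OF assms] \<sigma>(1)]
    by (simp add: residual_def comp_def)
  ultimately have "q - T q = 0" by (rule LIMSEQ_unique)
  then have "T q = q" by simp
  have "decseq (\<lambda>k. N (x k - q))" using dist_fixed_point_Suc_le[OF \<open>T q = q\<close>]
    by (simp add: decseq_SucI)
  then obtain l where l: "(\<lambda>k. N (x k - q)) \<longlonglongrightarrow> l"
    using decseq_convergent[of _ 0] nonneg by blast
  have "((\<lambda>k. N (x k - q)) \<circ> \<sigma>) \<longlonglongrightarrow> 0" using \<sigma>(2) LIMSEQ_N_iff by (simp add: comp_def)
  then have "l = 0" using LIMSEQ_subseq_LIMSEQ[OF l \<sigma>(1)] LIMSEQ_unique by blast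
  then show ?thesis using l \<open>T q = q\<close> LIMSEQ_N_iff by blast
qed

end

section \<open>Monotone maps and weighted norms\<close>

lemma (in norm_fun) lipschitz_wrt_obtain_pos:
  assumes "lipschitz_wrt N F"
  obtains L where "L > 0" "\<And>x y. N (F x - F y) \<le> L * N (x - y)"
proof -
  obtain L where L: "\<And>x y. N (F x - F y) \<le> L * N (x - y)"
    using assms unfolding lipschitz_wrt_def by blast
  have "N (F x - F y) \<le> max L 1 * N (x - y)" for x y
    using L[of x y] mult_right_mono[OF max.cobounded1[of L 1] nonneg[of "x - y"]] by linarith
  then show ?thesis by (intro that[of "max L 1"]) simp_all
qed

lemma weighted_forward_step_nonexpansive:
  fixes F :: "real^'n \<Rightarrow> real^'n"
  assumes pos: "\<forall>i. \<eta> $ i > 0" and N: "N = wl1 \<eta> \<or> N = wlinf \<eta>"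
    and mono: "monotone_wrt N F c" and "L > 0" and lip: "\<And>x y. N (F x - F y) \<le> L * N (x - y)"
  shows "N ((x - (1 / L) *\<^sub>R F x) - (y - (1 / L) *\<^sub>R F y)) \<le> N (x - y)"
proof -
  interpret norm_fun N using N norm_fun_wl1[OF pos] norm_fun_wlinf[OF pos] by blast
  have nonascent: "nonascent N (x - y) (- (F x - F y))" for x y
    by (rule monotone_wrt_lipschitz_nonascent[OF mono lip])
  from N show ?thesis
  proof
    assume "N = wl1 \<eta>"
    then show ?thesis using wl1_forward_step_nonexpansive[OF pos _ _ \<open>L > 0\<close>] nonascent lip by simp
  next
    assume "N = wlinf \<eta>"
    then show ?thesis using wlinf_forward_step_nonexpansive[OF pos _ _ \<open>L > 0\<close>] nonascent lip
      by simp
  qed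
qed

lemma averaging_weight:
  fixes \<alpha> L :: real
  assumes "\<alpha> > 0" "L > 0"
  defines "\<theta> \<equiv> \<alpha> * L / (1 + \<alpha> * L)"
  shows "0 < \<theta>" "\<theta> < 1" "(1 - \<theta>) * \<alpha> = \<theta> / L"
proof -
  have "\<alpha> * L > 0" using assms by simp
  then show "0 < \<theta>" "\<theta> < 1" unfolding \<theta>_def by simp_all
  have "\<theta> * (1 + \<alpha> * L) = \<alpha> * L" unfolding \<theta>_def using \<open>\<alpha> * L > 0\<close> by simp
  then show "(1 - \<theta>) * \<alpha> = \<theta> / L" using \<open>L > 0\<close> by (simp add: field_simps)
qed

lemma resolvent_averaged:
  assumes "bij (\<lambda>y. y + \<alpha> *\<^sub>R F y)" "\<alpha> > 0" "L > 0"
  defines "\<theta> \<equiv> \<alpha> * L / (1 + \<alpha> * L)"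
  shows "resolvent \<alpha> F a
    = (1 - \<theta>) *\<^sub>R a + \<theta> *\<^sub>R (resolvent \<alpha> F a - (1 / L) *\<^sub>R F (resolvent \<alpha> F a))"
proof -
  define y where "y = resolvent \<alpha> F a"
  have a: "a = y + \<alpha> *\<^sub>R F y" unfolding y_def using resolvent_solves[OF assms(1)] by simp
  have "(1 - \<theta>) *\<^sub>R a + \<theta> *\<^sub>R (y - (1 / L) *\<^sub>R F y) = y + ((1 - \<theta>) * \<alpha> - \<theta> / L) *\<^sub>R F y"
    unfolding a by (simp add: algebra_simps)
  also have "\<dots> = y" using averaging_weight(3)[OF assms(2,3)] unfolding \<theta>_def by simp
  finally show ?thesis unfolding y_def by simp
qed

theorem proximal_point_weighted_monotone:
  fixes F :: "real^'n \<Rightarrow> real^'n"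
  assumes cont: "continuous_on UNIV F" and pos: "\<forall>i. \<eta> $ i > 0" and N: "N = wl1 \<eta> \<or> N = wlinf \<eta>"
    and mono: "monotone_wrt N F 0" and "lipschitz_wrt N F" and "F p = 0" and "\<alpha> > 0"
  shows "\<exists>xs. F xs = 0 \<and> proximal_iter \<alpha> F x0 \<longlonglongrightarrow> xs"
proof -
  interpret norm_fun N using N norm_fun_wl1[OF pos] norm_fun_wlinf[OF pos] by blast
  obtain L where "L > 0" and lip: "\<And>x y. N (F x - F y) \<le> L * N (x - y)"
    using lipschitz_wrt_obtain_pos[OF \<open>lipschitz_wrt N F\<close>] by blast
  define J where "J = resolvent \<alpha> F"
  define T where "T a = J a - (1 / L) *\<^sub>R F (J a)" for a
  define \<theta> where "\<theta> = \<alpha> * L / (1 + \<alpha> * L)"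
  have weight: "0 < \<theta>" "\<theta> < 1" unfolding \<theta>_def using averaging_weight[OF \<open>\<alpha> > 0\<close> \<open>L > 0\<close>]
    by simp_all
  have bij: "bij (\<lambda>y. y + \<alpha> *\<^sub>R F y)" using resolvent_bij[OF cont mono] \<open>\<alpha> > 0\<close> by simp
  interpret krasnoselskii_mann N T \<theta> "proximal_iter \<alpha> F x0"
  proof
    show "N (T a - T b) \<le> N (a - b)" for a b
      using weighted_forward_step_nonexpansive[OF pos N mono \<open>L > 0\<close> lip, of "J a" "J b"]
        resolvent_lipschitz[OF cont mono, of \<alpha> a b] \<open>\<alpha> > 0\<close>
      unfolding T_def J_def by simp
    show "0 < \<theta>" "\<theta> < 1" by (fact weight)+
    show "proximal_iter \<alpha> F x0 (Suc k)
        = (1 - \<theta>) *\<^sub>R proximal_iter \<alpha> F x0 k + \<theta> *\<^sub>R T (proximal_iter \<alpha> F x0 k)"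
      for k unfolding proximal_iter_Suc T_def J_def \<theta>_def
        by (rule resolvent_averaged[OF bij \<open>\<alpha> > 0\<close> \<open>L > 0\<close>])
  qed
  have fixed_iff: "T q = q \<longleftrightarrow> F q = 0" for q
  proof -
    have "J q = (1 - \<theta>) *\<^sub>R q + \<theta> *\<^sub>R T q"
      unfolding T_def J_def \<theta>_def by (rule resolvent_averaged[OF bij \<open>\<alpha> > 0\<close> \<open>L > 0\<close>])
    then have "T q = q \<longleftrightarrow> J q = q" using weight(1) by (auto simp: algebra_simps)
    then show ?thesis unfolding J_def using resolvent_fixed_iff[OF cont mono \<open>\<alpha> > 0\<close>] by simp
  qed
  then show ?thesis using tendsto_fixed_point[of p] \<open>F p = 0\<close> by blast
qed

theorem theorem28:
  fixes F :: "real^'n \<Rightarrow> real^'n" and x0 :: "real^'n"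
  assumes "continuous_on UNIV F"
  shows "(\<forall>N c \<alpha>. is_norm_fun N \<and> monotone_wrt N F c \<and> c > 0 \<and> \<alpha> > 0 \<longrightarrow>
            (\<exists>xs. F xs = 0 \<and> (\<forall>y. F y = 0 \<longrightarrow> y = xs) \<and>
                  proximal_iter \<alpha> F x0 \<longlonglongrightarrow> xs \<and>
                  (\<forall>k. N (proximal_iter \<alpha> F x0 (Suc k) - xs)
                        \<le> 1 / (1 + \<alpha> * c) * N (proximal_iter \<alpha> F x0 k - xs))))
       \<and> (\<forall>N \<eta> \<alpha>. (\<forall>i. \<eta> $ i > 0) \<and> (N = wl1 \<eta> \<or> N = wlinf \<eta>) \<and>
            monotone_wrt N F 0 \<and> lipschitz_wrt N F \<and> diagL F \<noteq> 0 \<and>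
            {x. F x = 0} \<noteq> {} \<and> \<alpha> > 0 \<longrightarrow>
            (\<exists>xs. F xs = 0 \<and> proximal_iter \<alpha> F x0 \<longlonglongrightarrow> xs))"
proof (intro conjI allI impI; elim conjE)
  fix N :: "real^'n \<Rightarrow> real" and c \<alpha> :: real
  assume "is_norm_fun N" "monotone_wrt N F c" "c > 0" "\<alpha> > 0"
  then show "\<exists>xs. F xs = 0 \<and> (\<forall>y. F y = 0 \<longrightarrow> y = xs) \<and> proximal_iter \<alpha> F x0 \<longlonglongrightarrow> xs \<and>
      (\<forall>k. N (proximal_iter \<alpha> F x0 (Suc k) - xs)
        \<le> 1 / (1 + \<alpha> * c) * N (proximal_iter \<alpha> F x0 k - xs))"
    using norm_fun.proximal_point_strongly_monotone[OF _ assms] unfolding norm_fun_def by blast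
next
  fix N :: "real^'n \<Rightarrow> real" and \<eta> :: "real^'n" and \<alpha> :: real
  assume "\<forall>i. \<eta> $ i > 0" "N = wl1 \<eta> \<or> N = wlinf \<eta>" "monotone_wrt N F 0" "lipschitz_wrt N F"
    "{x. F x = 0} \<noteq> {}" "\<alpha> > 0"
  then show "\<exists>xs. F xs = 0 \<and> proximal_iter \<alpha> F x0 \<longlonglongrightarrow> xs"
    using proximal_point_weighted_monotone[OF assms] by blast
qed

end
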